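(* Let $m\ge1$ be an integer. Then $\big[N,\frac im\log L^m\big]=-i\mathbf1$ on $\ell^2_m\cap\mathrm D(N\log L^m)\cap\mathrm D(\log(L^m)N)$, and this subspace is infinite-dimensional.
   Context: $\ell^2=\ell^2(\mathbb N)$, $\mathbb N=\{0,1,\dots\}$, basis $(\xi_n)$; $N\xi_n=n\xi_n$ (self-adjoint, maximal domain); $L$ left shift ($L\xi_n=\xi_{n-1}$, $L\xi_0=0$). For a linear operator $A$, $\mathrm D(\log A)=\{f\in\bigcap_{k\ge0}\mathrm D(A^k):\lim_K\sum_{k=1}^K\frac1k(\mathbf1-A)^kf\text{ exists}\}$, $\log Af=-\sum_{k\ge1}\frac1k(\mathbf1-A)^kf$. $\ell^2_m=\{\varphi\in\ell^2:\lim_{k\to\infty}(\mathbf1-L^m)^k\varphi=0\}$. Commutators $[A,B]=AB-BA$ on $\mathrm D(AB)\cap\mathrm D(BA)$. *)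

theory Defs
  imports Complex_Main
begin

text \<open>Vectors of l2(N) are represented as sequences nat => complex (coefficients
  w.r.t. the standard basis xi_n).\<close>

definition l2 :: "(nat \<Rightarrow> complex) set" where
  "l2 = {f. summable (\<lambda>n. (cmod (f n))\<^sup>2)}"

definition l2norm :: "(nat \<Rightarrow> complex) \<Rightarrow> real" where
  "l2norm f = sqrt (\<Sum>n. (cmod (f n))\<^sup>2)"

definition smul :: "complex \<Rightarrow> (nat \<Rightarrow> complex) \<Rightarrow> (nat \<Rightarrow> complex)" where
  "smul c f = (\<lambda>n. c * f n)"

definition Nop :: "(nat \<Rightarrow> complex) \<Rightarrow> (nat \<Rightarrow> complex)" where
  "Nop f = (\<lambda>n. of_nat n * f n)"

definition domN :: "(nat \<Rightarrow> complex) set" where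
  "domN = {f \<in> l2. Nop f \<in> l2}"

text \<open>Powers of the left shift: L xi_n = xi_(n-1), L xi_0 = 0, so (L^m f) n = f (n+m).\<close>
definition Lpow :: "nat \<Rightarrow> (nat \<Rightarrow> complex) \<Rightarrow> (nat \<Rightarrow> complex)" where
  "Lpow m f = (\<lambda>n. f (n + m))"

definition oneMinusLpow :: "nat \<Rightarrow> (nat \<Rightarrow> complex) \<Rightarrow> (nat \<Rightarrow> complex)" where
  "oneMinusLpow m f = (\<lambda>n. f n - Lpow m f n)"

definition logPartial :: "nat \<Rightarrow> (nat \<Rightarrow> complex) \<Rightarrow> nat \<Rightarrow> (nat \<Rightarrow> complex)" where
  "logPartial m f K = (\<lambda>n. \<Sum>k=1..K. (1 / of_nat k) * ((oneMinusLpow m ^^ k) f) n)"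

text \<open>Convergence in l2: the partial sums converge in l2-norm to h.
  (Since L^m is bounded on l2, f in l2 already lies in all D((L^m)^k).)\<close>
definition logSeriesConv :: "nat \<Rightarrow> (nat \<Rightarrow> complex) \<Rightarrow> (nat \<Rightarrow> complex) \<Rightarrow> bool" where
  "logSeriesConv m f h \<longleftrightarrow> f \<in> l2 \<and> h \<in> l2 \<and>
     (\<lambda>K. l2norm (\<lambda>n. logPartial m f K n - h n)) \<longlonglongrightarrow> 0"

definition domLog :: "nat \<Rightarrow> (nat \<Rightarrow> complex) set" where
  "domLog m = {f. \<exists>h. logSeriesConv m f h}"

definition logL :: "nat \<Rightarrow> (nat \<Rightarrow> complex) \<Rightarrow> (nat \<Rightarrow> complex)" where
  "logL m f = (\<lambda>n. - (THE h. logSeriesConv m f h) n)"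

definition domNLog :: "nat \<Rightarrow> (nat \<Rightarrow> complex) set" where
  "domNLog m = {f \<in> domLog m. logL m f \<in> domN}"

definition domLogN :: "nat \<Rightarrow> (nat \<Rightarrow> complex) set" where
  "domLogN m = {f \<in> domN. Nop f \<in> domLog m}"

definition l2m :: "nat \<Rightarrow> (nat \<Rightarrow> complex) set" where
  "l2m m = {\<phi> \<in> l2. (\<lambda>k. l2norm ((oneMinusLpow m ^^ k) \<phi>)) \<longlonglongrightarrow> 0}"

end

theory Submission
  imports Defs
begin

text \<open>Iterating the commutator identity [N, 1 - L^m] = m L^m gives
  [N, (1 - L^m)^k] = k m L^m (1 - L^m)^(k-1). In the partial sums of the logarithm series the factor
  1/k therefore cancels and the commutator telescopes to m (f - (1 - L^m)^K f); on l2_m the remainder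
  tends to zero, and passing to coordinatewise limits gives [N, log L^m] = -m.
  The geometric vectors n \<mapsto> z^n with 0 < z < 1 are eigenvectors of 1 - L^m with eigenvalue
  1 - z^m, which makes every series involved explicit; they lie in all the domains and are linearly
  independent for distinct z by a Vandermonde argument.\<close>

lemma norm_add_square_le:
  fixes a b :: "'a::real_normed_vector"
  shows "(norm (a + b))\<^sup>2 \<le> 2 * (norm a)\<^sup>2 + 2 * (norm b)\<^sup>2"
proof -
  have "(norm (a + b))\<^sup>2 \<le> (norm a + norm b)\<^sup>2"
    by (simp add: norm_triangle_ineq power_mono)
  also have "\<dots> \<le> 2 * (norm a)\<^sup>2 + 2 * (norm b)\<^sup>2"
    using zero_le_power2[of "norm a - norm b"] unfolding power2_sum power2_diff by linarith
  finally show ?thesis .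
qed

lemma l2_lincomb:
  assumes "f \<in> l2" "g \<in> l2"
  shows "(\<lambda>n. a * f n + b * g n) \<in> l2"
  unfolding l2_def
proof (rule CollectI, rule summable_comparison_test)
  show "summable (\<lambda>n. 2 * (cmod a)\<^sup>2 * (cmod (f n))\<^sup>2 + 2 * (cmod b)\<^sup>2 * (cmod (g n))\<^sup>2)"
    using assms unfolding l2_def by (intro summable_add summable_mult) auto
  show "\<exists>N. \<forall>n\<ge>N. norm ((cmod (a * f n + b * g n))\<^sup>2)
          \<le> 2 * (cmod a)\<^sup>2 * (cmod (f n))\<^sup>2 + 2 * (cmod b)\<^sup>2 * (cmod (g n))\<^sup>2"
    using norm_add_square_le[of "a * f n" "b * g n" for n]
    by (auto simp: norm_mult power_mult_distrib mult.assoc)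
qed

lemma l2_scale: "f \<in> l2 \<Longrightarrow> (\<lambda>n. a * f n) \<in> l2"
  using l2_lincomb[of f f a 0] by simp

lemma l2_diff: "f \<in> l2 \<Longrightarrow> g \<in> l2 \<Longrightarrow> (\<lambda>n. f n - g n) \<in> l2"
  using l2_lincomb[of f g 1 "-1"] by simp

lemma l2_sum: "finite A \<Longrightarrow> (\<And>k. k \<in> A \<Longrightarrow> g k \<in> l2) \<Longrightarrow> (\<lambda>n. \<Sum>k\<in>A. g k n) \<in> l2"
proof (induction A rule: finite_induct)
  case empty
  show ?case by (simp add: l2_def)
next
  case (insert x F)
  then show ?case using l2_lincomb[of "g x" "\<lambda>n. \<Sum>k\<in>F. g k n" 1 1] by simp
qed

lemma l2_Lpow: "f \<in> l2 \<Longrightarrow> Lpow m f \<in> l2"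
  unfolding l2_def Lpow_def by (simp add: summable_iff_shift[of "\<lambda>n. (cmod (f n))\<^sup>2" m])

lemma l2_oneMinusLpow_pow: "f \<in> l2 \<Longrightarrow> (oneMinusLpow m ^^ k) f \<in> l2"
  by (induction k) (simp_all add: oneMinusLpow_def l2_diff l2_Lpow)

lemma l2_logPartial: "f \<in> l2 \<Longrightarrow> logPartial m f K \<in> l2"
  unfolding logPartial_def by (intro l2_sum l2_scale l2_oneMinusLpow_pow) auto

lemma norm_le_l2norm: "f \<in> l2 \<Longrightarrow> cmod (f n) \<le> l2norm f"
  unfolding l2norm_def l2_def
  using real_sqrt_le_mono[OF sum_le_suminf[of "\<lambda>n. (cmod (f n))\<^sup>2" "{n}"]] by simp

lemma l2norm_tendsto_zero_imp_coord:
  assumes "\<And>K. g K \<in> l2" "(\<lambda>K. l2norm (g K)) \<longlonglongrightarrow> 0"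
  shows "(\<lambda>K. g K n) \<longlonglongrightarrow> 0"
  by (rule tendsto_norm_zero_cancel, rule real_tendsto_sandwich[OF _ _ tendsto_const assms(2)])
     (simp_all add: norm_le_l2norm[OF assms(1)])

lemma l2norm_lincomb_tendsto_zero:
  assumes u: "u \<in> l2" and v: "v \<in> l2" and a: "a \<longlonglongrightarrow> 0" and b: "b \<longlonglongrightarrow> 0"
  shows "(\<lambda>K. l2norm (\<lambda>n. a K * u n + b K * v n)) \<longlonglongrightarrow> 0"
proof -
  define U where "U = (\<Sum>n. (cmod (u n))\<^sup>2)"
  define V where "V = (\<Sum>n. (cmod (v n))\<^sup>2)"
  have su: "summable (\<lambda>n. (cmod (u n))\<^sup>2)" and sv: "summable (\<lambda>n. (cmod (v n))\<^sup>2)"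
    using u v by (auto simp: l2_def)
  have bound: "(cmod (a K * u n + b K * v n))\<^sup>2
      \<le> 2 * (cmod (a K))\<^sup>2 * (cmod (u n))\<^sup>2 + 2 * (cmod (b K))\<^sup>2 * (cmod (v n))\<^sup>2" for K n
    using norm_add_square_le[of "a K * u n" "b K * v n"] by (simp add: norm_mult power_mult_distrib)
  have sR: "summable (\<lambda>n. 2 * (cmod (a K))\<^sup>2 * (cmod (u n))\<^sup>2 + 2 * (cmod (b K))\<^sup>2 * (cmod (v n))\<^sup>2)" for K
    using su sv by (intro summable_add summable_mult)
  have sL: "summable (\<lambda>n. (cmod (a K * u n + b K * v n))\<^sup>2)" for K
    by (rule summable_comparison_test[OF _ sR[of K]]) (use bound in auto)
  have le: "(\<Sum>n. (cmod (a K * u n + b K * v n))\<^sup>2) \<le> 2 * (cmod (a K))\<^sup>2 * U + 2 * (cmod (b K))\<^sup>2 * V" for K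
    using suminf_le[OF bound sL sR[of K]] su sv
    by (simp add: U_def V_def suminf_add[symmetric] suminf_mult summable_mult)
  have lim: "(\<lambda>K. 2 * (cmod (a K))\<^sup>2 * U + 2 * (cmod (b K))\<^sup>2 * V) \<longlonglongrightarrow> 0"
    using a b by (auto intro!: tendsto_eq_intros)
  have "(\<lambda>K. \<Sum>n. (cmod (a K * u n + b K * v n))\<^sup>2) \<longlonglongrightarrow> 0"
    by (rule tendsto_sandwich[OF _ _ tendsto_const lim]) (auto intro!: always_eventually suminf_nonneg sL le)
  then show ?thesis
    unfolding l2norm_def using tendsto_real_sqrt by force
qed

lemma logSeriesConv_coord_tendsto:
  "logSeriesConv m f h \<Longrightarrow> (\<lambda>K. logPartial m f K n) \<longlonglongrightarrow> h n"
  unfolding logSeriesConv_def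
  using l2norm_tendsto_zero_imp_coord[where g = "\<lambda>K n. logPartial m f K n - h n"]
  by (auto simp: LIM_zero_iff l2_diff l2_logPartial)

lemma logSeriesConv_unique: "logSeriesConv m f h \<Longrightarrow> logSeriesConv m f h' \<Longrightarrow> h = h'"
  by (rule ext, rule LIMSEQ_unique[OF logSeriesConv_coord_tendsto logSeriesConv_coord_tendsto])

lemma logL_eq: "logSeriesConv m f h \<Longrightarrow> logL m f = (\<lambda>n. - h n)"
  unfolding logL_def by (metis logSeriesConv_unique the_equality)

lemma Nop_oneMinusLpow_commutator:
  "Nop (oneMinusLpow m f) n - oneMinusLpow m (Nop f) n = of_nat m * Lpow m f n"
  by (simp add: oneMinusLpow_def Lpow_def Nop_def algebra_simps)

lemma Nop_oneMinusLpow_pow_commutator: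
  "Nop ((oneMinusLpow m ^^ Suc k) f) n - (oneMinusLpow m ^^ Suc k) (Nop f) n
     = of_nat (Suc k * m) * Lpow m ((oneMinusLpow m ^^ k) f) n"
proof (induction k arbitrary: n)
  case 0
  show ?case using Nop_oneMinusLpow_commutator[of m f n] by simp
next
  case (Suc k)
  define T where "T = oneMinusLpow m"
  define h where "h = (T ^^ k) f"
  define c :: complex where "c = of_nat (Suc k * m)"
  have "(T ^^ Suc k) (Nop f) = (\<lambda>n. Nop (T h) n - c * Lpow m h n)"
    using Suc.IH unfolding T_def h_def c_def by (auto simp: algebra_simps)
  then have "(T ^^ Suc (Suc k)) (Nop f) n = T (Nop (T h)) n - c * Lpow m (T h) n"
    by (simp add: T_def oneMinusLpow_def Lpow_def algebra_simps)
  moreover have "Nop (T (T h)) n - T (Nop (T h)) n = of_nat m * Lpow m (T h) n"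
    unfolding T_def by (rule Nop_oneMinusLpow_commutator)
  ultimately show ?case
    unfolding T_def h_def c_def by (simp add: algebra_simps)
qed

lemma logPartial_commutator:
  "of_nat n * logPartial m f K n - logPartial m (Nop f) K n
     = of_nat m * (f n - (oneMinusLpow m ^^ K) f n)"
proof -
  let ?T = "oneMinusLpow m"
  have "of_nat n * logPartial m f K n - logPartial m (Nop f) K n
      = (\<Sum>k<K. 1 / of_nat (Suc k) * (Nop ((?T ^^ Suc k) f) n - (?T ^^ Suc k) (Nop f) n))"
    unfolding logPartial_def Nop_def
    by (simp add: sum.atLeast1_atMost_eq sum_distrib_left sum_subtractf[symmetric] algebra_simps
        del: funpow.simps)
  also have "\<dots> = (\<Sum>k<K. of_nat m * ((?T ^^ k) f n - (?T ^^ Suc k) f n))"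
    unfolding Nop_oneMinusLpow_pow_commutator
    by (intro sum.cong refl) (simp add: oneMinusLpow_def Lpow_def of_nat_mult del: of_nat_Suc mult_Suc)
  also have "\<dots> = of_nat m * (f n - (?T ^^ K) f n)"
    by (simp only: sum_distrib_left[symmetric] sum_lessThan_telescope'[of "\<lambda>k. (?T ^^ k) f n"])
       simp
  finally show ?thesis .
qed

lemma Nop_logL_commutator:
  assumes "f \<in> l2m m" "f \<in> domLog m" "Nop f \<in> domLog m"
  shows "Nop (logL m f) n - logL m (Nop f) n = - of_nat m * f n"
proof -
  obtain h h' where h: "logSeriesConv m f h" and h': "logSeriesConv m (Nop f) h'"
    using assms(2,3) unfolding domLog_def by blast
  have "(\<lambda>K. (oneMinusLpow m ^^ K) f n) \<longlonglongrightarrow> 0"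
    using assms(1) unfolding l2m_def
    by (auto intro: l2norm_tendsto_zero_imp_coord l2_oneMinusLpow_pow)
  then have "(\<lambda>K. of_nat n * logPartial m f K n - logPartial m (Nop f) K n) \<longlonglongrightarrow> of_nat m * (f n - 0)"
    unfolding logPartial_commutator by (intro tendsto_intros)
  moreover have "(\<lambda>K. of_nat n * logPartial m f K n - logPartial m (Nop f) K n) \<longlonglongrightarrow> of_nat n * h n - h' n"
    by (intro tendsto_intros logSeriesConv_coord_tendsto h h')
  ultimately have "of_nat n * h n - h' n = of_nat m * f n"
    using LIMSEQ_unique by fastforce
  moreover have "Nop (logL m f) n - logL m (Nop f) n = - (of_nat n * h n - h' n)"
    unfolding logL_eq[OF h] logL_eq[OF h'] by (simp add: Nop_def)
  ultimately show ?thesis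
    by simp
qed

definition geom :: "complex \<Rightarrow> nat \<Rightarrow> complex" where
  "geom z = (\<lambda>n. z ^ n)"

lemma norm_power_square: "(norm (z ^ n))\<^sup>2 = ((norm z)\<^sup>2) ^ n"
  for z :: "'a::real_normed_div_algebra"
  by (metis norm_power power_mult mult.commute)

lemma l2_geom: "cmod z < 1 \<Longrightarrow> geom z \<in> l2"
  by (simp add: l2_def geom_def norm_power_square summable_geometric abs_square_less_1)

lemma l2_Nop_geom:
  assumes z: "cmod z < 1"
  shows "Nop (geom z) \<in> l2"
  unfolding l2_def
proof (rule CollectI, rule summable_comparison_test_ev)
  define y where "y = sqrt (cmod z)"
  have y: "0 \<le> y" "y < 1" "y\<^sup>2 = cmod z"
    using z by (auto simp: y_def)
  have "(\<lambda>n. of_nat n * y ^ n) \<longlonglongrightarrow> 0"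
    using y by (intro powser_times_n_limit_0) simp
  then have "\<forall>\<^sub>F n in sequentially. real n * y ^ n < 1"
    by (rule order_tendstoD(2)) simp
  then show "\<forall>\<^sub>F n in sequentially. norm ((cmod (Nop (geom z) n))\<^sup>2) \<le> cmod z ^ n"
  proof eventually_elim
    case (elim n)
    have "cmod (Nop (geom z) n) = real n * y ^ n * y ^ n"
      by (simp add: Nop_def geom_def norm_mult norm_power mult.assoc power_mult
          flip: y(3) power_add mult_2)
    moreover have "(y ^ n)\<^sup>2 = cmod z ^ n"
      by (metis y(3) power_mult mult.commute)
    ultimately have "(cmod (Nop (geom z) n))\<^sup>2 = (real n * y ^ n)\<^sup>2 * cmod z ^ n"
      by (simp add: power_mult_distrib)
    also have "\<dots> \<le> 1 * cmod z ^ n"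
      using elim y by (intro mult_right_mono) (auto simp: abs_square_le_1 less_imp_le)
    finally show ?case by simp
  qed
  show "summable (\<lambda>n. cmod z ^ n)"
    using z by (simp add: summable_geometric)
qed

lemma oneMinusLpow_pow_geom:
  "(oneMinusLpow m ^^ k) (geom z) = (\<lambda>n. (1 - z ^ m) ^ k * geom z n)"
  by (induction k) (auto simp: oneMinusLpow_def Lpow_def geom_def power_add algebra_simps)

lemma log_series_partial_tendsto:
  fixes t :: "'a::{real_normed_field,banach}"
  assumes "norm t < 1"
  shows "(\<lambda>K. \<Sum>k=1..K. 1 / of_nat k * t ^ k) \<longlonglongrightarrow> (\<Sum>k. 1 / of_nat k * t ^ k)"
proof -
  have "summable (\<lambda>k. 1 / of_nat k * t ^ k)"
  proof (rule summable_comparison_test)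
    show "\<exists>N. \<forall>k\<ge>N. norm (1 / of_nat k * t ^ k) \<le> norm t ^ k"
      by (intro exI[of _ 1] allI impI)
         (simp add: norm_mult norm_power norm_divide divide_le_eq mult_le_cancel_left1)
    show "summable (\<lambda>k. norm t ^ k)"
      using assms by (simp add: summable_geometric)
  qed
  then have "(\<lambda>K. \<Sum>k<Suc K. 1 / of_nat k * t ^ k) \<longlonglongrightarrow> (\<Sum>k. 1 / of_nat k * t ^ k)"
    using LIMSEQ_Suc summable_LIMSEQ by blast
  \<comment> \<open>the term k = 0 vanishes because 1 / 0 = 0\<close>
  moreover have "(\<Sum>k<Suc K. 1 / of_nat k * t ^ k) = (\<Sum>k=1..K. 1 / of_nat k * t ^ k)" for K
    by (simp add: lessThan_Suc_eq_insert_0 sum.atLeast1_atMost_eq image_Suc_lessThan)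
  ultimately show ?thesis
    by simp
qed

lemma geom_in_l2m:
  assumes "cmod z < 1" "cmod (1 - z ^ m) < 1"
  shows "geom z \<in> l2m m"
proof -
  have "(\<lambda>k. l2norm (\<lambda>n. (1 - z ^ m) ^ k * geom z n + 0 * geom z n)) \<longlonglongrightarrow> 0"
    using assms by (intro l2norm_lincomb_tendsto_zero l2_geom LIMSEQ_power_zero) auto
  then show ?thesis
    using assms(1) by (simp add: l2m_def l2_geom oneMinusLpow_pow_geom)
qed

lemma logSeriesConv_geom:
  fixes z :: complex
  assumes z: "cmod z < 1" and t: "cmod (1 - z ^ m) < 1"
  defines "c \<equiv> \<Sum>k. 1 / of_nat k * (1 - z ^ m) ^ k"
  shows "logSeriesConv m (geom z) (\<lambda>n. c * geom z n)"
    and "logSeriesConv m (Nop (geom z)) (\<lambda>n. c * Nop (geom z) n - of_nat m * geom z n)"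
proof -
  define s where "s K = (\<Sum>k=1..K. 1 / of_nat k * (1 - z ^ m) ^ k)" for K
  have s: "(\<lambda>K. s K - c) \<longlonglongrightarrow> 0"
    unfolding s_def c_def using log_series_partial_tendsto[OF t] by (simp add: LIM_zero_iff)
  have partial: "logPartial m (geom z) K n = s K * geom z n" for K n
    by (simp add: logPartial_def oneMinusLpow_pow_geom s_def sum_distrib_right mult.assoc)
  have "(\<lambda>K. l2norm (\<lambda>n. (s K - c) * geom z n + 0 * geom z n)) \<longlonglongrightarrow> 0"
    using z s by (intro l2norm_lincomb_tendsto_zero l2_geom) auto
  then show "logSeriesConv m (geom z) (\<lambda>n. c * geom z n)"
    using z by (simp add: logSeriesConv_def l2_geom l2_scale partial algebra_simps)
  \<comment> \<open>the commutator identity reduces the series of N z^n to that of z^n\<close>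
  have "logPartial m (Nop (geom z)) K n
      = of_nat n * logPartial m (geom z) K n - of_nat m * (geom z n - (oneMinusLpow m ^^ K) (geom z) n)"
    for K n
    using logPartial_commutator[of n m "geom z" K] by (simp add: algebra_simps)
  then have "logPartial m (Nop (geom z)) K n - (c * Nop (geom z) n - of_nat m * geom z n)
      = (s K - c) * Nop (geom z) n + of_nat m * (1 - z ^ m) ^ K * geom z n" for K n
    by (simp add: partial oneMinusLpow_pow_geom Nop_def algebra_simps)
  moreover have "(\<lambda>K. l2norm (\<lambda>n. (s K - c) * Nop (geom z) n + of_nat m * (1 - z ^ m) ^ K * geom z n))
      \<longlonglongrightarrow> 0"
    using z t s by (intro l2norm_lincomb_tendsto_zero l2_geom l2_Nop_geom tendsto_mult_right_zero
        LIMSEQ_power_zero) auto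
  ultimately show "logSeriesConv m (Nop (geom z)) (\<lambda>n. c * Nop (geom z) n - of_nat m * geom z n)"
    using z l2_lincomb[OF l2_Nop_geom l2_geom, of z z c "- of_nat m"]
    by (simp add: logSeriesConv_def l2_geom l2_Nop_geom)
qed

lemma geom_in_domains:
  assumes "cmod z < 1" "cmod (1 - z ^ m) < 1"
  shows "geom z \<in> l2m m \<inter> domNLog m \<inter> domLogN m"
proof -
  define c where "c = (\<Sum>k. 1 / of_nat k * (1 - z ^ m) ^ k)"
  note conv = logSeriesConv_geom[OF assms, folded c_def]
  have "logL m (geom z) = (\<lambda>n. - c * geom z n)"
    using logL_eq[OF conv(1)] by simp
  moreover have "Nop (\<lambda>n. - c * geom z n) = (\<lambda>n. - c * Nop (geom z) n)"
    by (simp add: Nop_def algebra_simps)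
  moreover have "(\<lambda>n. - c * geom z n) \<in> l2" "(\<lambda>n. - c * Nop (geom z) n) \<in> l2"
    using assms by (intro l2_scale l2_geom l2_Nop_geom; simp)+
  ultimately show ?thesis
    using assms conv
    by (auto simp: domNLog_def domLogN_def domLog_def domN_def
        intro: geom_in_l2m l2_geom l2_Nop_geom l2_scale)
qed

lemma geom_of_real_in_domains:
  assumes "0 < r" "r < 1"
  shows "geom (of_real r) \<in> l2m m \<inter> domNLog m \<inter> domLogN m"
proof (rule geom_in_domains)
  have "0 < r ^ m" "r ^ m \<le> 1"
    using assms by (simp_all add: power_le_one)
  moreover have "1 - complex_of_real r ^ m = of_real (1 - r ^ m)"
    by simp
  ultimately show "cmod (of_real r) < 1" "cmod (1 - of_real r ^ m) < 1"
    using assms by (simp_all only: norm_of_real)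
qed

lemma powers_linear_independent:
  fixes x c :: "nat \<Rightarrow> 'a::field"
  assumes "inj_on x {..<d}" "\<And>n. (\<Sum>j<d. c j * x j ^ n) = 0"
  shows "\<forall>j<d. c j = 0"
  using assms
proof (induction d arbitrary: c)
  case 0
  then show ?case by simp
next
  case (Suc d)
  have "(\<Sum>j<d. (c j * (x j - x d)) * x j ^ n) = 0" for n
  proof -
    have "(\<Sum>j<d. (c j * (x j - x d)) * x j ^ n)
        = (\<Sum>j<Suc d. c j * x j ^ Suc n) - x d * (\<Sum>j<Suc d. c j * x j ^ n)"
      by (simp add: sum_distrib_left sum_subtractf[symmetric] algebra_simps)
    then show ?thesis
      by (simp only: Suc.prems(2)) simp
  qed
  moreover have "inj_on x {..<d}"
    using Suc.prems(1) by (rule inj_on_subset) auto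
  ultimately have "\<forall>j<d. c j * (x j - x d) = 0"
    using Suc.IH[of "\<lambda>j. c j * (x j - x d)"] by blast
  moreover have "x j \<noteq> x d" if "j < d" for j
    using Suc.prems(1) that by (auto dest: inj_onD)
  ultimately have low: "\<forall>j<d. c j = 0"
    by auto
  then have "c d = 0"
    using Suc.prems(2)[of 0] by simp
  with low show ?case
    using less_Suc_eq by auto
qed

theorem mainTheorem16:
  fixes m :: nat
  assumes "m \<ge> 1"
  shows "(\<forall>f \<in> l2m m \<inter> domNLog m \<inter> domLogN m.
            (\<lambda>n. Nop (smul (\<i> / of_nat m) (logL m f)) n
                 - smul (\<i> / of_nat m) (logL m (Nop f)) n)
            = smul (- \<i>) f)
       \<and> (\<forall>d::nat. \<exists>fs :: nat \<Rightarrow> (nat \<Rightarrow> complex).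
            (\<forall>j<d. fs j \<in> l2m m \<inter> domNLog m \<inter> domLogN m) \<and>
            (\<forall>c :: nat \<Rightarrow> complex.
               (\<lambda>n. \<Sum>j<d. c j * fs j n) = (\<lambda>n. 0) \<longrightarrow> (\<forall>j<d. c j = 0)))"
proof (intro conjI ballI allI)
  fix f
  assume "f \<in> l2m m \<inter> domNLog m \<inter> domLogN m"
  then have commutator: "Nop (logL m f) n - logL m (Nop f) n = - of_nat m * f n" for n
    by (intro Nop_logL_commutator) (auto simp: domNLog_def domLogN_def)
  show "(\<lambda>n. Nop (smul (\<i> / of_nat m) (logL m f)) n - smul (\<i> / of_nat m) (logL m (Nop f)) n)
      = smul (- \<i>) f"
  proof
    fix n
    have "Nop (smul (\<i> / of_nat m) (logL m f)) n - smul (\<i> / of_nat m) (logL m (Nop f)) n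
        = \<i> / of_nat m * (Nop (logL m f) n - logL m (Nop f) n)"
      by (simp add: Nop_def smul_def algebra_simps)
    also have "\<dots> = smul (- \<i>) f n"
      using assms by (simp add: commutator smul_def)
    finally show "Nop (smul (\<i> / of_nat m) (logL m f)) n - smul (\<i> / of_nat m) (logL m (Nop f)) n
        = smul (- \<i>) f n" .
  qed
next
  fix d :: nat
  define z :: "nat \<Rightarrow> complex" where "z j = of_real (1 / (real j + 2))" for j
  have "geom (z j) \<in> l2m m \<inter> domNLog m \<inter> domLogN m" for j
    unfolding z_def by (rule geom_of_real_in_domains) auto
  moreover have "inj_on z {..<d}"
    by (rule inj_onI) (simp add: z_def)
  ultimately show "\<exists>fs. (\<forall>j<d. fs j \<in> l2m m \<inter> domNLog m \<inter> domLogN m) \<and>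
      (\<forall>c. (\<lambda>n. \<Sum>j<d. c j * fs j n) = (\<lambda>n. 0) \<longrightarrow> (\<forall>j<d. c j = 0))"
    by (intro exI[of _ "\<lambda>j. geom (z j)"]) (auto simp: geom_def fun_eq_iff
        dest!: powers_linear_independent)
qed

end
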